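(* Let $G$ and $H$ be Polish groups such that $G$ has the Rosendal property. Let $\varphi:G\to H$ be a continuous homomorphism with $\varphi(G)\neq\{1_H\}$. Let $E$ be an equivalence relation on $G$ such that for every infinite set $I\subseteq\mathbb{N}$ the set $$Q_I=\{g\in G:\text{there is a strictly increasing sequence }(k_n)_{n\ge1}\text{ in } I \text{ with } \varphi(g)^{k_n}\to 1_H\}$$ is $E$-invariant. Then every equivalence class of $E$ that is dense in $G$ is meager. In particular, $E$ does not have a comeager class.
   Context: A Polish group $G$ has the Rosendal property if for every infinite set $I\subseteq\mathbb{N}$ and every neighbourhood $V$ of $1$ in $G$, the set $\{g\in G:\text{there is } n\in I \text{ with } g^n\in V\}$ is dense in $G$. A set is $E$-invariant if it is a union of $E$-classes. *)

theory Defs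
  imports "HOL-Analysis.Analysis" "HOL-Algebra.Group"
begin

definition Polish_space :: "'a topology \<Rightarrow> bool" where
  "Polish_space X \<longleftrightarrow> completely_metrizable_space X \<and> separable_space X"

definition topological_group :: "('a, 'm) monoid_scheme \<Rightarrow> 'a topology \<Rightarrow> bool" where
  "topological_group G T \<longleftrightarrow> group G \<and> topspace T = carrier G
     \<and> continuous_map (prod_topology T T) T (\<lambda>(x, y). x \<otimes>\<^bsub>G\<^esub> y)
     \<and> continuous_map T T (\<lambda>x. inv\<^bsub>G\<^esub> x)"

definition Polish_group :: "('a, 'm) monoid_scheme \<Rightarrow> 'a topology \<Rightarrow> bool" where
  "Polish_group G T \<longleftrightarrow> topological_group G T \<and> Polish_space T"

definition neighbourhood :: "'a topology \<Rightarrow> 'a set \<Rightarrow> 'a \<Rightarrow> bool" where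
  "neighbourhood T V x \<longleftrightarrow> V \<subseteq> topspace T \<and> (\<exists>U. openin T U \<and> x \<in> U \<and> U \<subseteq> V)"

definition Rosendal_property :: "('a, 'm) monoid_scheme \<Rightarrow> 'a topology \<Rightarrow> bool" where
  "Rosendal_property G T \<longleftrightarrow>
     (\<forall>I :: nat set. \<forall>V. infinite I \<and> neighbourhood T V \<one>\<^bsub>G\<^esub> \<longrightarrow>
        T closure_of {g \<in> carrier G. \<exists>n\<in>I. g [^]\<^bsub>G\<^esub> n \<in> V} = topspace T)"

definition nowhere_dense :: "'a topology \<Rightarrow> 'a set \<Rightarrow> bool" where
  "nowhere_dense T A \<longleftrightarrow> T interior_of (T closure_of A) = {}"

definition meager :: "'a topology \<Rightarrow> 'a set \<Rightarrow> bool" where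
  "meager T A \<longleftrightarrow> (\<exists>\<F>. countable \<F> \<and> (\<forall>N\<in>\<F>. nowhere_dense T N) \<and> A \<subseteq> \<Union>\<F>)"

definition comeager :: "'a topology \<Rightarrow> 'a set \<Rightarrow> bool" where
  "comeager T A \<longleftrightarrow> A \<subseteq> topspace T \<and> meager T (topspace T - A)"

definition E_invariant :: "'a set \<Rightarrow> ('a \<times> 'a) set \<Rightarrow> 'a set \<Rightarrow> bool" where
  "E_invariant X E A \<longleftrightarrow> (\<exists>\<C> \<subseteq> X // E. A = \<Union>\<C>)"

end

theory Submission
  imports Defs
begin

text \<open>Fix an infinite \<open>I \<subseteq> \<nat>\<close>. With \<open>B\<^sub>m\<close> the ball of radius \<open>1/(m+1)\<close> about \<open>\<one>\<^sub>H\<close>, the set \<open>Q\<^sub>I\<close>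
  contains the intersection over \<open>m, N\<close> of the sets \<open>{g. \<exists>n \<in> I, n \<ge> N. \<phi>(g\<^sup>n) \<in> B\<^sub>m}\<close>,
  which are open by continuity and dense by the Rosendal property, so \<open>Q\<^sub>I\<close> is comeager.
  Being \<open>E\<close>-invariant, \<open>Q\<^sub>I\<close> either contains an \<open>E\<close>-class or is disjoint from it, and then the
  class is meager. So a non-meager class lies in every \<open>Q\<^sub>I\<close>. For \<open>g\<close> in such a class, taking
  for \<open>I\<close> the exponents \<open>n\<close> with \<open>\<phi>(g)\<^sup>n\<close> outside a fixed neighbourhood of \<open>\<one>\<^sub>H\<close> forces
  \<open>\<phi>(g)\<^sup>n \<rightarrow> \<one>\<^sub>H\<close>, whence \<open>\<phi>(g) = \<phi>(g)\<^sup>n\<^sup>+\<^sup>1 \<phi>(g)\<^sup>-\<^sup>n \<rightarrow> \<one>\<^sub>H\<close>. If the class is also dense, the closed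
  kernel of \<open>\<phi>\<close> is everything. Finally, a comeager class is dense by the Baire category
  theorem, hence meager, which is impossible in a nonempty Polish space.\<close>

lemma meager_subset:
  assumes "meager X B" "A \<subseteq> B"
  shows "meager X A"
proof -
  obtain \<F> where "countable \<F>" "\<forall>N\<in>\<F>. nowhere_dense X N" "B \<subseteq> \<Union>\<F>"
    using assms(1) unfolding meager_def by blast
  with assms(2) show ?thesis
    unfolding meager_def by blast
qed

lemma nowhere_dense_complement_of_open_dense:
  assumes "openin X U" "X closure_of U = topspace X"
  shows "nowhere_dense X (topspace X - U)"
proof -
  have "X closure_of (topspace X - U) = topspace X - U"
    using assms(1) by (simp add: closure_of_closedin closedin_diff)
  then have "X interior_of X closure_of (topspace X - U) = topspace X - X closure_of U"
    by (simp add: interior_of_complement)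
  then show ?thesis
    unfolding nowhere_dense_def assms(2) by simp
qed

lemma meager_if_disjoint_comeager:
  assumes "comeager X S" "C \<subseteq> topspace X" "C \<inter> S = {}"
  shows "meager X C"
proof -
  have "C \<subseteq> topspace X - S"
    using assms(2,3) by blast
  then show ?thesis
    using assms(1) meager_subset unfolding comeager_def by blast
qed

lemma nonempty_open_not_meager:
  assumes "completely_metrizable_space X" "openin X U" "U \<noteq> {}"
  shows "\<not> meager X U"
proof
  assume "meager X U"
  then obtain \<F> where \<F>: "countable \<F>" "\<forall>N\<in>\<F>. nowhere_dense X N" "U \<subseteq> \<Union>\<F>"
    by (auto simp: meager_def)
  have "X interior_of \<Union>((closure_of) X ` \<F>) = {}"
    by (rule Baire_category_alt) (use assms \<F> in \<open>auto simp: nowhere_dense_def\<close>)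
  moreover have "U \<subseteq> \<Union>((closure_of) X ` \<F>)"
  proof
    fix x assume "x \<in> U"
    then obtain N where "N \<in> \<F>" "x \<in> N" "x \<in> topspace X"
      using \<F>(3) openin_subset[OF assms(2)] by blast
    then show "x \<in> \<Union>((closure_of) X ` \<F>)"
      using closure_of_subset_Int[of X N] by blast
  qed
  then have "U \<subseteq> X interior_of \<Union>((closure_of) X ` \<F>)"
    using assms(2) interior_of_maximal by blast
  ultimately show False
    using assms(3) by blast
qed

lemma comeager_imp_dense:
  assumes "completely_metrizable_space X" "comeager X S"
  shows "X closure_of S = topspace X"
proof (rule ccontr)
  assume "X closure_of S \<noteq> topspace X"
  then have "topspace X - X closure_of S \<noteq> {}"
    using closure_of_subset_topspace[of X S] by auto
  moreover have "S \<subseteq> X closure_of S"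
    using assms(2) closure_of_subset unfolding comeager_def by blast
  then have "topspace X - X closure_of S \<subseteq> topspace X - S"
    by blast
  then have "meager X (topspace X - X closure_of S)"
    using assms(2) meager_subset unfolding comeager_def by blast
  ultimately show False
    using nonempty_open_not_meager[OF assms(1)] by (simp add: openin_diff)
qed

lemma comeager_not_meager:
  assumes "completely_metrizable_space X" "topspace X \<noteq> {}" "comeager X S"
  shows "\<not> meager X S"
proof
  assume "meager X S"
  then obtain \<F> where "countable \<F>" "\<forall>N\<in>\<F>. nowhere_dense X N" "S \<subseteq> \<Union>\<F>"
    unfolding meager_def by blast
  moreover obtain \<G> where "countable \<G>" "\<forall>N\<in>\<G>. nowhere_dense X N" "topspace X - S \<subseteq> \<Union>\<G>"
    using assms(3) unfolding comeager_def meager_def by blast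
  ultimately have "meager X (topspace X)"
    unfolding meager_def by (intro exI[of _ "\<F> \<union> \<G>"]) auto
  with assms(1,2) show False
    using nonempty_open_not_meager by blast
qed

lemma topological_group_nat_pow_continuous:
  assumes "topological_group G T"
  shows "continuous_map T T (\<lambda>g. g [^]\<^bsub>G\<^esub> (n::nat))"
proof (induction n)
  case 0
  have "group G" "topspace T = carrier G"
    using assms by (auto simp: topological_group_def)
  then show ?case
    by (simp add: group.is_monoid monoid.one_closed)
next
  case (Suc n)
  have mult: "continuous_map (prod_topology T T) T (\<lambda>(x, y). x \<otimes>\<^bsub>G\<^esub> y)"
    using assms by (simp add: topological_group_def)
  have "continuous_map T (prod_topology T T) (\<lambda>g. (g [^]\<^bsub>G\<^esub> n, g))"
    using Suc by (simp add: continuous_map_pairwise o_def)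
  from continuous_map_compose[OF this mult] show ?case
    by (simp add: o_def)
qed

lemma powers_tendsto_one_imp_one:
  assumes "topological_group H T" "Hausdorff_space T" "x \<in> carrier H"
    and "limitin T (\<lambda>n. x [^]\<^bsub>H\<^esub> (n::nat)) \<one>\<^bsub>H\<^esub> sequentially"
  shows "x = \<one>\<^bsub>H\<^esub>"
proof -
  interpret group H
    using assms(1) by (simp add: topological_group_def)
  have mult: "continuous_map (prod_topology T T) T (\<lambda>(x, y). x \<otimes>\<^bsub>H\<^esub> y)"
    and inv: "continuous_map T T (\<lambda>x. inv\<^bsub>H\<^esub> x)" and ts: "topspace T = carrier H"
    using assms(1) by (auto simp: topological_group_def)
  have "limitin T (\<lambda>n. inv\<^bsub>H\<^esub> (x [^]\<^bsub>H\<^esub> n)) (inv\<^bsub>H\<^esub> \<one>\<^bsub>H\<^esub>) sequentially"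
    using continuous_map_limit[OF inv assms(4)] by (simp add: o_def)
  with limitin_sequentially_offset[OF assms(4), of 1]
  have "limitin (prod_topology T T) (\<lambda>n. (x [^]\<^bsub>H\<^esub> (n + 1), inv\<^bsub>H\<^esub> (x [^]\<^bsub>H\<^esub> n))) (\<one>\<^bsub>H\<^esub>, inv\<^bsub>H\<^esub> \<one>\<^bsub>H\<^esub>) sequentially"
    by (simp add: limitin_pairwise o_def)
  from continuous_map_limit[OF mult this]
  have "limitin T (\<lambda>n. x [^]\<^bsub>H\<^esub> Suc n \<otimes>\<^bsub>H\<^esub> inv\<^bsub>H\<^esub> (x [^]\<^bsub>H\<^esub> n)) \<one>\<^bsub>H\<^esub> sequentially"
    by (simp add: o_def)
  moreover have "x [^]\<^bsub>H\<^esub> Suc n \<otimes>\<^bsub>H\<^esub> inv\<^bsub>H\<^esub> (x [^]\<^bsub>H\<^esub> n) = x" for n :: nat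
    unfolding nat_pow_Suc2[OF assms(3)] using assms(3) by (simp add: m_assoc)
  ultimately have to_one: "limitin T (\<lambda>n. x) \<one>\<^bsub>H\<^esub> sequentially"
    by simp
  have "limitin T (\<lambda>n. x) x sequentially"
    using assms(3) ts by simp
  from limitin_Hausdorff_unique[OF this to_one] show ?thesis
    using assms(2) by simp
qed

lemma eq_one_if_subseq_powers_tendsto_one:
  assumes "topological_group H T" "Hausdorff_space T" "x \<in> carrier H"
    and subseq: "\<And>I :: nat set. infinite I \<Longrightarrow> \<exists>k. strict_mono k \<and> range k \<subseteq> I \<and>
                    limitin T (\<lambda>n. x [^]\<^bsub>H\<^esub> k n) \<one>\<^bsub>H\<^esub> sequentially"
  shows "x = \<one>\<^bsub>H\<^esub>"
proof (rule ccontr)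
  assume "x \<noteq> \<one>\<^bsub>H\<^esub>"
  then have "\<not> limitin T (\<lambda>n. x [^]\<^bsub>H\<^esub> (n::nat)) \<one>\<^bsub>H\<^esub> sequentially"
    using powers_tendsto_one_imp_one[OF assms(1-3)] by blast
  moreover have "\<one>\<^bsub>H\<^esub> \<in> topspace T"
    using assms(1) by (simp add: topological_group_def group.is_monoid monoid.one_closed)
  ultimately obtain W where W: "openin T W" "\<one>\<^bsub>H\<^esub> \<in> W"
    and "\<not> eventually (\<lambda>n. x [^]\<^bsub>H\<^esub> (n::nat) \<in> W) sequentially"
    unfolding limitin_def by blast
  then have "infinite {n. x [^]\<^bsub>H\<^esub> (n::nat) \<notin> W}"
    by (simp add: cofinite_eq_sequentially[symmetric] eventually_cofinite)
  from subseq[OF this] obtain k where k: "range k \<subseteq> {n. x [^]\<^bsub>H\<^esub> (n::nat) \<notin> W}"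
    and "limitin T (\<lambda>n. x [^]\<^bsub>H\<^esub> k n) \<one>\<^bsub>H\<^esub> sequentially"
    by blast
  with W have "eventually (\<lambda>n. x [^]\<^bsub>H\<^esub> k n \<in> W) sequentially"
    unfolding limitin_def by blast
  then obtain N where "x [^]\<^bsub>H\<^esub> k N \<in> W"
    unfolding eventually_sequentially by blast
  with k show False
    by blast
qed

context Metric_space
begin

lemma subseq_limitin_if_frequently_near:
  fixes I :: "nat set"
  assumes "l \<in> M"
    and near: "\<And>m N. \<exists>n\<in>I. N \<le> n \<and> f n \<in> M \<and> d l (f n) < 1 / real (Suc m)"
  shows "\<exists>k. strict_mono k \<and> range k \<subseteq> I \<and> limitin mtopology (\<lambda>j. f (k j)) l sequentially"
proof -
  have "\<forall>m N. \<exists>n\<in>I. N \<le> n \<and> f n \<in> M \<and> d l (f n) < 1 / real (Suc m)"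
    using near by blast
  then obtain c :: "nat \<Rightarrow> nat \<Rightarrow> nat"
    where c: "\<And>m N. c m N \<in> I \<and> N \<le> c m N \<and> f (c m N) \<in> M \<and> d l (f (c m N)) < 1 / real (Suc m)"
    by metis
  define k where "k = rec_nat (c 0 0) (\<lambda>j kj. c (Suc j) (Suc kj))"
  have k_Suc: "k (Suc j) = c (Suc j) (Suc (k j))" for j
    by (simp add: k_def)
  have "\<exists>N. k j = c j N" for j
    by (cases j) (auto simp: k_Suc k_def)
  then have k_near: "k j \<in> I \<and> f (k j) \<in> M \<and> d l (f (k j)) < 1 / real (Suc j)" for j
    using c by metis
  have "strict_mono k"
    unfolding strict_mono_Suc_iff using c k_Suc by (metis Suc_le_lessD)
  moreover have "limitin mtopology (\<lambda>j. f (k j)) l sequentially"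
    unfolding limitin_metric
  proof (intro conjI allI impI)
    fix e :: real
    assume "e > 0"
    then obtain N :: nat where "N > 0" "1 / real N < e"
      using ex_inverse_of_nat_less by (metis inverse_eq_divide)
    then have "d (f (k j)) l < e" if "N \<le> j" for j
      using k_near[of j] commute[of l] that
      by (smt (verit) frac_le of_nat_0_less_iff of_nat_Suc of_nat_mono)
    then show "\<forall>\<^sub>F j in sequentially. f (k j) \<in> M \<and> d (f (k j)) l < e"
      using k_near unfolding eventually_sequentially by blast
  qed (fact assms)
  ultimately show ?thesis
    using k_near by blast
qed

end

lemma Rosendal_powers_in_open_dense:
  fixes I :: "nat set"
  assumes "topological_group G T" "Rosendal_property G T"
    and "openin T V" "\<one>\<^bsub>G\<^esub> \<in> V" "infinite I"
  shows "openin T {g \<in> carrier G. \<exists>n\<in>I. g [^]\<^bsub>G\<^esub> n \<in> V}"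
    and "T closure_of {g \<in> carrier G. \<exists>n\<in>I. g [^]\<^bsub>G\<^esub> n \<in> V} = topspace T"
proof -
  have "topspace T = carrier G"
    using assms(1) by (simp add: topological_group_def)
  then have "{g \<in> carrier G. \<exists>n\<in>I. g [^]\<^bsub>G\<^esub> n \<in> V}
             = (\<Union>n\<in>I. {g \<in> topspace T. g [^]\<^bsub>G\<^esub> n \<in> V})"
    by auto
  moreover have "openin T {g \<in> topspace T. g [^]\<^bsub>G\<^esub> n \<in> V}" for n :: nat
    using openin_continuous_map_preimage[OF topological_group_nat_pow_continuous[OF assms(1)] assms(3)] .
  ultimately show "openin T {g \<in> carrier G. \<exists>n\<in>I. g [^]\<^bsub>G\<^esub> n \<in> V}"
    by auto
  have "neighbourhood T V \<one>\<^bsub>G\<^esub>"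
    using assms(3,4) openin_subset unfolding neighbourhood_def by blast
  then show "T closure_of {g \<in> carrier G. \<exists>n\<in>I. g [^]\<^bsub>G\<^esub> n \<in> V} = topspace T"
    using assms(2,5) unfolding Rosendal_property_def by blast
qed

definition return_set ::
    "('a, 'm) monoid_scheme \<Rightarrow> ('b, 'n) monoid_scheme \<Rightarrow> 'b topology \<Rightarrow> ('a \<Rightarrow> 'b) \<Rightarrow> nat set \<Rightarrow> 'a set"
  where "return_set G H TH \<phi> I =
    {g \<in> carrier G. \<exists>k :: nat \<Rightarrow> nat. strict_mono k \<and> range k \<subseteq> I \<and>
       limitin TH (\<lambda>n. \<phi> g [^]\<^bsub>H\<^esub> k n) \<one>\<^bsub>H\<^esub> sequentially}"

lemma comeager_return_set:
  assumes G: "topological_group G TG" "Rosendal_property G TG"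
    and H: "topological_group H TH" "metrizable_space TH"
    and \<phi>: "\<phi> \<in> hom G H" "continuous_map TG TH \<phi>"
    and "infinite I"
  shows "comeager TG (return_set G H TH \<phi> I)"
proof -
  have groups: "group G" "group H" and tsG: "topspace TG = carrier G"
    and tsH: "topspace TH = carrier H"
    using G(1) H(1) by (auto simp: topological_group_def)
  obtain M d where "Metric_space M d" and TH: "TH = Metric_space.mtopology M d"
    using H(2) by (auto simp: metrizable_space_def)
  interpret Metric_space M d by fact
  have one_M: "\<one>\<^bsub>H\<^esub> \<in> M"
    using tsH TH groups(2) by (simp add: group.is_monoid monoid.one_closed)
  define V where "V m = {g \<in> topspace TG. \<phi> g \<in> mball \<one>\<^bsub>H\<^esub> (1 / real (Suc m))}" for m
  define D where "D m N = {g \<in> carrier G. \<exists>n\<in>I \<inter> {N..}. g [^]\<^bsub>G\<^esub> n \<in> V m}" for m N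
  have "openin TG (V m)" "\<one>\<^bsub>G\<^esub> \<in> V m" for m
    using openin_continuous_map_preimage[OF \<phi>(2), of "mball \<one>\<^bsub>H\<^esub> (1 / real (Suc m))"]
      one_M groups tsG hom_one[OF \<phi>(1) groups]
    by (auto simp: V_def TH group.is_monoid monoid.one_closed)
  moreover have "infinite (I \<inter> {N..})" for N
  proof -
    have "I \<inter> {N..} = I - {..<N}"
      by auto
    then show ?thesis
      using \<open>infinite I\<close> by (simp add: Diff_infinite_finite)
  qed
  ultimately have D: "openin TG (D m N)" "TG closure_of (D m N) = topspace TG" for m N
    unfolding D_def using Rosendal_powers_in_open_dense[OF G] by blast+
  have "g \<in> return_set G H TH \<phi> I" if "g \<in> carrier G" "\<And>m N. g \<in> D m N" for g
  proof -
    have "\<exists>n\<in>I. N \<le> n \<and> \<phi> g [^]\<^bsub>H\<^esub> n \<in> M \<and> d \<one>\<^bsub>H\<^esub> (\<phi> g [^]\<^bsub>H\<^esub> n) < 1 / real (Suc m)" for m N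
      using that(2)[of m N] hom_nat_pow[OF \<phi>(1) that(1) groups] by (auto simp: D_def V_def)
    from subseq_limitin_if_frequently_near[OF one_M this] show ?thesis
      using that(1) by (simp add: return_set_def TH)
  qed
  then have "topspace TG - return_set G H TH \<phi> I \<subseteq> \<Union>((\<lambda>(m, N). topspace TG - D m N) ` UNIV)"
    using tsG by blast
  moreover have "\<forall>S \<in> (\<lambda>(m, N). topspace TG - D m N) ` UNIV. nowhere_dense TG S"
    using nowhere_dense_complement_of_open_dense[OF D] by auto
  moreover have "countable ((\<lambda>(m, N). topspace TG - D m N) ` (UNIV :: (nat \<times> nat) set))"
    by simp
  ultimately have "meager TG (topspace TG - return_set G H TH \<phi> I)"
    unfolding meager_def by blast
  then show ?thesis
    using tsG by (auto simp: comeager_def return_set_def)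
qed

lemma class_subset_or_disjoint_invariant:
  assumes "equiv A E" "C \<in> A // E" "E_invariant A E S"
  shows "C \<subseteq> S \<or> C \<inter> S = {}"
proof -
  obtain \<C> where "\<C> \<subseteq> A // E" "S = \<Union>\<C>"
    using assms(3) unfolding E_invariant_def by blast
  then show ?thesis
    using quotient_disj[OF assms(1,2)] by blast
qed

lemma continuous_map_constant_if_dense:
  assumes "continuous_map X Y f" "t1_space Y" "c \<in> topspace Y"
    and "S \<subseteq> topspace X" "X closure_of S = topspace X" "\<And>x. x \<in> S \<Longrightarrow> f x = c"
    and "x \<in> topspace X"
  shows "f x = c"
proof -
  have "closedin X {x \<in> topspace X. f x \<in> {c}}"
    using closedin_continuous_map_preimage[OF assms(1) closedin_t1_singleton[OF assms(2,3)]] .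
  moreover have "S \<subseteq> {x \<in> topspace X. f x \<in> {c}}"
    using assms(4,6) by blast
  ultimately have "X closure_of S \<subseteq> {x \<in> topspace X. f x \<in> {c}}"
    by (rule closure_of_minimal[rotated])
  then show ?thesis
    using assms(5,7) by blast
qed

lemma hom_trivial_if_dense_subset_return_sets:
  assumes "topological_group G TG" "topological_group H TH" "Hausdorff_space TH"
    and \<phi>: "\<phi> \<in> hom G H" "continuous_map TG TH \<phi>"
    and C: "C \<subseteq> carrier G" "TG closure_of C = topspace TG"
      "\<And>I. infinite I \<Longrightarrow> C \<subseteq> return_set G H TH \<phi> I"
  shows "\<phi> ` carrier G = {\<one>\<^bsub>H\<^esub>}"
proof -
  have tsG: "topspace TG = carrier G" and tsH: "topspace TH = carrier H"
    and one: "\<one>\<^bsub>G\<^esub> \<in> carrier G" "\<one>\<^bsub>H\<^esub> \<in> carrier H"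
    using assms(1,2) by (auto simp: topological_group_def group.is_monoid monoid.one_closed)
  have on_C: "\<phi> g = \<one>\<^bsub>H\<^esub>" if "g \<in> C" for g
  proof (rule eq_one_if_subseq_powers_tendsto_one[OF assms(2,3)])
    show "\<phi> g \<in> carrier H"
      using hom_in_carrier[OF \<phi>(1)] C(1) that by blast
    show "\<exists>k. strict_mono k \<and> range k \<subseteq> I \<and> limitin TH (\<lambda>n. \<phi> g [^]\<^bsub>H\<^esub> k n) \<one>\<^bsub>H\<^esub> sequentially"
      if "infinite I" for I :: "nat set"
      using C(3)[OF that] \<open>g \<in> C\<close> by (auto simp: return_set_def)
  qed
  have "\<phi> g = \<one>\<^bsub>H\<^esub>" if "g \<in> carrier G" for g
    by (rule continuous_map_constant_if_dense[OF \<phi>(2) Hausdorff_imp_t1_space[OF assms(3)] _ _ C(2) on_C])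
      (use C(1) that one(2) tsG tsH in auto)
  then show ?thesis
    using one(1) by (auto intro: rev_image_eqI)
qed

theorem lemma4p1:
  fixes G :: "('a, 'm) monoid_scheme" and TG :: "'a topology"
    and H :: "('b, 'n) monoid_scheme" and TH :: "'b topology"
    and \<phi> :: "'a \<Rightarrow> 'b" and E :: "('a \<times> 'a) set"
  assumes "Polish_group G TG" and "Polish_group H TH"
    and "Rosendal_property G TG"
    and "\<phi> \<in> hom G H" and "continuous_map TG TH \<phi>"
    and "\<phi> ` carrier G \<noteq> {\<one>\<^bsub>H\<^esub>}"
    and "equiv (carrier G) E"
    and "\<And>I :: nat set. infinite I \<Longrightarrow>
           E_invariant (carrier G) E
             {g \<in> carrier G. \<exists>k :: nat \<Rightarrow> nat. strict_mono k \<and> range k \<subseteq> I \<and>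
                limitin TH (\<lambda>n. \<phi> g [^]\<^bsub>H\<^esub> k n) \<one>\<^bsub>H\<^esub> sequentially}"
  shows "(\<forall>C \<in> carrier G // E. TG closure_of C = topspace TG \<longrightarrow> meager TG C)
         \<and> (\<forall>C \<in> carrier G // E. \<not> comeager TG C)"
proof -
  have G: "topological_group G TG" "completely_metrizable_space TG"
    and H: "topological_group H TH" "metrizable_space TH"
    using assms(1,2) by (auto simp: Polish_group_def Polish_space_def
        completely_metrizable_imp_metrizable_space)
  then have tsG: "topspace TG = carrier G" and one_G: "\<one>\<^bsub>G\<^esub> \<in> carrier G"
    by (auto simp: topological_group_def group.is_monoid monoid.one_closed)
  have class_subset: "C \<subseteq> carrier G" if "C \<in> carrier G // E" for C
    using in_quotient_imp_subset[OF assms(7) that] .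
  have class_in_return_set: "C \<subseteq> return_set G H TH \<phi> I"
    if "C \<in> carrier G // E" "infinite I" "\<not> meager TG C" for C I
    using class_subset_or_disjoint_invariant[OF assms(7) that(1) assms(8)[OF that(2)]]
      meager_if_disjoint_comeager[OF comeager_return_set[OF G(1) assms(3) H assms(4,5) that(2)]]
      class_subset[OF that(1)] that(3) tsG
    by (auto simp: return_set_def)
  have dense_meager: "meager TG C" if C: "C \<in> carrier G // E" "TG closure_of C = topspace TG" for C
    using hom_trivial_if_dense_subset_return_sets[OF G(1) H(1) metrizable_imp_Hausdorff_space[OF H(2)]
        assms(4,5) class_subset[OF C(1)] C(2)] class_in_return_set[OF C(1)] assms(6)
    by blast
  have "\<not> comeager TG C" if "C \<in> carrier G // E" for C
    using comeager_not_meager[OF G(2)] dense_meager[OF that] comeager_imp_dense[OF G(2)] one_G tsG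
    by auto
  with dense_meager show ?thesis
    by blast
qed

end
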